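(* Let $m\ge3$ be odd and $n\ge2$. The $m$th order $n$-dimensional Hilbert tensor $\mathcal{A}=(a_{i_1\dots i_m})$, $a_{i_1\dots i_m}=\frac{1}{i_1+\cdots+i_m-m+1}$ for $i_1,\dots,i_m\in\{1,\dots,n\}$, is strongly positive definite.
   Context: For $\mathbf{x}\in\mathbb{R}^n$, $\mathcal{A}\mathbf{x}^{m-1}$ is the vector with $i$th component $\sum_{i_2,\dots,i_m}a_{ii_2\dots i_m}x_{i_2}\cdots x_{i_m}$. For odd $m$ and symmetric $\mathcal{A}$, $\mathcal{A}$ is strongly positive definite if $\mathcal{A}\mathbf{x}^{m-1}>\mathbf{0}$ componentwise for all nonzero $\mathbf{x}\in\mathbb{R}^n$. *)

theory Defs
  imports "HOL-Analysis.Analysis"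
begin

text \<open>An m-th order n-dimensional real tensor is represented as a function on index
lists; only index lists of length m with entries in {1..n} are relevant.
A vector in R^n is a function nat => real, only components 1..n are relevant.\<close>

type_synonym tensor = "nat list \<Rightarrow> real"

definition index_lists :: "nat \<Rightarrow> nat \<Rightarrow> nat list set" where
  "index_lists k n = {is. length is = k \<and> set is \<subseteq> {1..n}}"

definition tensor_apply :: "nat \<Rightarrow> nat \<Rightarrow> tensor \<Rightarrow> (nat \<Rightarrow> real) \<Rightarrow> nat \<Rightarrow> real" where
  "tensor_apply m n A x i =
     (\<Sum>is\<in>index_lists (m - 1) n. A (i # is) * (\<Prod>j\<leftarrow>is. x j))"

definition symmetric_tensor :: "nat \<Rightarrow> nat \<Rightarrow> tensor \<Rightarrow> bool" where
  "symmetric_tensor m n A \<longleftrightarrow>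
     (\<forall>is\<in>index_lists m n. \<forall>js. mset js = mset is \<longrightarrow> A js = A is)"

definition strongly_positive_definite :: "nat \<Rightarrow> nat \<Rightarrow> tensor \<Rightarrow> bool" where
  "strongly_positive_definite m n A \<longleftrightarrow>
     odd m \<and> symmetric_tensor m n A \<and>
     (\<forall>x::nat \<Rightarrow> real. (\<exists>i\<in>{1..n}. x i \<noteq> 0) \<longrightarrow>
        (\<forall>i\<in>{1..n}. tensor_apply m n A x i > 0))"

definition hilbert_tensor :: "nat \<Rightarrow> tensor" where
  "hilbert_tensor m is = 1 / (real (sum_list is) - real m + 1)"

end

theory Submission
  imports Defs "HOL-Computational_Algebra.Polynomial"
begin

text \<open>The Hilbert tensor is a moment tensor: since 1/(k+1) is the integral of t^k over [0,1],
the i-th component of A x^{m-1} equals the integral over [0,1] of t^{i-1} p(t)^{m-1}, where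
p(t) = x_1 + x_2 t + ... + x_n t^{n-1}. For odd m the integrand is nonnegative, and for x
nonzero p is a nonzero polynomial, so the continuous integrand does not vanish identically
and the integral is positive.\<close>

lemma finite_index_lists: "finite (index_lists k n)"
proof -
  have "index_lists k n = {xs. set xs \<subseteq> {1..n} \<and> length xs = k}"
    unfolding index_lists_def by auto
  then show ?thesis using finite_lists_length_eq[of "{1..n}" k] by simp
qed

lemma index_lists_Suc:
  "index_lists (Suc k) n = (\<lambda>(j, is). j # is) ` ({1..n} \<times> index_lists k n)"
proof
  show "index_lists (Suc k) n \<subseteq> (\<lambda>(j, is). j # is) ` ({1..n} \<times> index_lists k n)"
  proof
    fix xs assume "xs \<in> index_lists (Suc k) n"
    then obtain j ys where "xs = j # ys" "j \<in> {1..n}" "ys \<in> index_lists k n"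
      unfolding index_lists_def by (cases xs) auto
    then show "xs \<in> (\<lambda>(j, is). j # is) ` ({1..n} \<times> index_lists k n)" by force
  qed
qed (auto simp: index_lists_def)

lemma sum_index_lists_prod_list:
  fixes f :: "nat \<Rightarrow> 'a::comm_semiring_1"
  shows "(\<Sum>is\<in>index_lists k n. \<Prod>j\<leftarrow>is. f j) = (\<Sum>j\<in>{1..n}. f j) ^ k"
proof (induction k)
  case 0
  have "index_lists 0 n = {[]}" by (auto simp: index_lists_def)
  then show ?case by simp
next
  case (Suc k)
  have inj: "inj_on (\<lambda>(j, is). j # is) ({1..n} \<times> index_lists k n)"
    by (auto simp: inj_on_def)
  have "(\<Sum>is\<in>index_lists (Suc k) n. \<Prod>j\<leftarrow>is. f j)
      = (\<Sum>(j0, is)\<in>{1..n} \<times> index_lists k n. f j0 * (\<Prod>j\<leftarrow>is. f j))"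
    unfolding index_lists_Suc sum.reindex[OF inj] by (simp add: split_beta)
  also have "\<dots> = (\<Sum>j\<in>{1..n}. f j) * (\<Sum>is\<in>index_lists k n. \<Prod>j\<leftarrow>is. f j)"
    by (simp add: sum_product sum.cartesian_product)
  finally show ?case using Suc by simp
qed

lemma prod_list_mult_power:
  fixes x :: "nat \<Rightarrow> 'a::comm_monoid_mult"
  shows "(\<Prod>j\<leftarrow>is. x j * t ^ g j) = (\<Prod>j\<leftarrow>is. x j) * t ^ (\<Sum>j\<leftarrow>is. g j)"
  by (induction "is") (simp_all add: power_add ac_simps)

lemma sum_list_diff_one:
  "0 \<notin> set is \<Longrightarrow> (\<Sum>j\<leftarrow>is. j - 1) + length is = sum_list (is :: nat list)"
  by (induction "is") auto

lemma has_integral_power_unit_interval: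
  "((\<lambda>t::real. t ^ k) has_integral 1 / (real k + 1)) {0..1}"
proof -
  have "((\<lambda>t::real. t ^ k) has_integral (1 ^ Suc k / Suc k - 0 ^ Suc k / Suc k)) {0..1}"
  proof (rule fundamental_theorem_of_calculus)
    fix t :: real
    have "((\<lambda>t. t ^ Suc k / Suc k) has_real_derivative t ^ k) (at t)"
      by (intro derivative_eq_intros) auto
    then show "((\<lambda>t. t ^ Suc k / real (Suc k)) has_vector_derivative t ^ k) (at t within {0..1})"
      by (simp add: has_real_derivative_iff_has_vector_derivative[symmetric]
          has_field_derivative_at_within)
  qed simp
  then show ?thesis by (simp add: add.commute)
qed

lemma has_integral_pos_if_continuous_nonneg:
  fixes f :: "real \<Rightarrow> real"
  assumes integral: "(f has_integral I) {a..b}" and "a < b"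
    and cont: "continuous_on {a..b} f" and nonneg: "\<And>t. t \<in> {a..b} \<Longrightarrow> 0 \<le> f t"
    and t: "t \<in> {a..b}" "f t \<noteq> 0"
  shows "I > 0"
proof -
  have "I \<ge> 0" using has_integral_nonneg[OF integral] nonneg by blast
  moreover have "I \<noteq> 0"
  proof
    assume "I = 0"
    then have "f t = 0"
      using has_integral_0_cbox_imp_0[of a b f t] integral \<open>a < b\<close> cont nonneg t by auto
    with t show False by simp
  qed
  ultimately show ?thesis by simp
qed

lemma poly_nonzero_in_interval:
  fixes p :: "real poly"
  assumes "p \<noteq> 0" and "a < b"
  obtains t where "t \<in> {a<..<b}" and "poly p t \<noteq> 0"
proof -
  have "infinite {a<..<b}" using \<open>a < b\<close> by simp
  with poly_roots_finite[OF \<open>p \<noteq> 0\<close>] have "\<not> {a<..<b} \<subseteq> {t. poly p t = 0}"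
    using finite_subset by blast
  then show ?thesis using that by blast
qed

lemma coeff_sum_monom_inj:
  assumes "finite A" and "inj_on e A" and "j \<in> A"
  shows "coeff (\<Sum>i\<in>A. monom (c i) (e i)) (e j) = c j"
proof -
  have "coeff (\<Sum>i\<in>A. monom (c i) (e i)) (e j) = (\<Sum>i\<in>A. if e i = e j then c i else 0)"
    by (simp add: coeff_sum coeff_monom)
  also have "\<dots> = (\<Sum>i\<in>{j}. c i)"
    using assms by (intro sum.mono_neutral_cong_right) (auto simp: inj_on_eq_iff)
  finally show ?thesis by simp
qed

lemma sum_power_nonzero_in_unit_interval:
  fixes x :: "nat \<Rightarrow> real"
  assumes "j \<in> {1..n}" and "x j \<noteq> 0"
  obtains t where "t \<in> {0<..<1}" and "(\<Sum>j\<in>{1..n}. x j * t ^ (j - 1)) \<noteq> 0"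
proof -
  define p where "p = (\<Sum>j\<in>{1..n}. monom (x j) (j - 1))"
  have "coeff p (j - 1) = x j"
    unfolding p_def using assms(1) by (intro coeff_sum_monom_inj) (auto simp: inj_on_def)
  with assms(2) have "p \<noteq> 0" by auto
  then obtain t where "t \<in> {0<..<1}" and "poly p t \<noteq> 0"
    using poly_nonzero_in_interval[of p 0 1] by auto
  moreover have "poly p t = (\<Sum>j\<in>{1..n}. x j * t ^ (j - 1))"
    by (simp add: p_def poly_sum poly_monom)
  ultimately show ?thesis using that by simp
qed

lemma symmetric_hilbert_tensor: "symmetric_tensor m n (hilbert_tensor m)"
  unfolding symmetric_tensor_def hilbert_tensor_def by (metis sum_mset_sum_list)

lemma hilbert_tensor_Cons:
  assumes "m \<ge> 1" and "i \<ge> 1" and "is \<in> index_lists (m - 1) n"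
  shows "hilbert_tensor m (i # is) = 1 / (real ((i - 1) + (\<Sum>j\<leftarrow>is. j - 1)) + 1)"
proof -
  have "0 \<notin> set is" and "length is = m - 1"
    using assms(3) by (auto simp: index_lists_def)
  then have "(\<Sum>j\<leftarrow>is. j - 1) + (m - 1) = sum_list is"
    using sum_list_diff_one by metis
  with assms(1,2) show ?thesis
    unfolding hilbert_tensor_def by (simp add: of_nat_diff)
qed

lemma tensor_apply_hilbert_tensor_has_integral:
  assumes "m \<ge> 1" and "i \<ge> 1"
  shows "((\<lambda>t. t ^ (i - 1) * (\<Sum>j\<in>{1..n}. x j * t ^ (j - 1)) ^ (m - 1))
           has_integral tensor_apply m n (hilbert_tensor m) x i) {0..1}"
proof -
  define e where "e is = (i - 1) + (\<Sum>j\<leftarrow>is. j - 1)" for "is" :: "nat list"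
  have expand: "t ^ (i - 1) * (\<Sum>j\<in>{1..n}. x j * t ^ (j - 1)) ^ (m - 1)
      = (\<Sum>is\<in>index_lists (m - 1) n. (\<Prod>j\<leftarrow>is. x j) * t ^ e is)" for t :: real
    unfolding sum_index_lists_prod_list[symmetric] sum_distrib_left prod_list_mult_power e_def
    by (simp add: power_add ac_simps)
  have "((\<lambda>t. \<Sum>is\<in>index_lists (m - 1) n. (\<Prod>j\<leftarrow>is. x j) * t ^ e is) has_integral
          (\<Sum>is\<in>index_lists (m - 1) n. (\<Prod>j\<leftarrow>is. x j) * (1 / (real (e is) + 1)))) {0..1}"
    by (intro has_integral_sum finite_index_lists has_integral_mult_right
        has_integral_power_unit_interval)
  also have "(\<Sum>is\<in>index_lists (m - 1) n. (\<Prod>j\<leftarrow>is. x j) * (1 / (real (e is) + 1)))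
      = tensor_apply m n (hilbert_tensor m) x i"
    unfolding tensor_apply_def e_def using assms by (simp add: hilbert_tensor_Cons)
  finally show ?thesis unfolding expand .
qed

theorem corollary3p7:
  fixes m n :: nat
  assumes "odd m" and "m \<ge> 3" and "n \<ge> 2"
  shows "strongly_positive_definite m n (hilbert_tensor m)"
  unfolding strongly_positive_definite_def
proof (intro conjI allI impI ballI assms symmetric_hilbert_tensor)
  fix x :: "nat \<Rightarrow> real" and i
  assume "\<exists>j\<in>{1..n}. x j \<noteq> 0" and i: "i \<in> {1..n}"
  then obtain j where j: "j \<in> {1..n}" "x j \<noteq> 0" by blast
  obtain t where t: "t \<in> {0<..<1}" "(\<Sum>j\<in>{1..n}. x j * t ^ (j - 1)) \<noteq> 0"
    using sum_power_nonzero_in_unit_interval[where x = x, OF j] by blast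
  define F where "F = (\<lambda>t::real. t ^ (i - 1) * (\<Sum>j\<in>{1..n}. x j * t ^ (j - 1)) ^ (m - 1))"
  have "m \<ge> 1" and "i \<ge> 1" using assms(2) i by auto
  then have integral: "(F has_integral tensor_apply m n (hilbert_tensor m) x i) {0..1}"
    unfolding F_def by (rule tensor_apply_hilbert_tensor_has_integral)
  have "even (m - 1)" using assms(1,2) by simp
  then have nonneg: "0 \<le> F s" if "s \<in> {0..1}" for s
    using that by (simp add: F_def zero_le_even_power)
  have cont: "continuous_on {0..1} F" unfolding F_def by (intro continuous_intros)
  have "t ^ (i - 1) \<noteq> 0" and "(\<Sum>j\<in>{1..n}. x j * t ^ (j - 1)) ^ (m - 1) \<noteq> 0"
    using t by auto
  then have "F t \<noteq> 0" by (simp add: F_def)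
  moreover have "t \<in> {0..1}" using t by simp
  ultimately show "tensor_apply m n (hilbert_tensor m) x i > 0"
    using has_integral_pos_if_continuous_nonneg[OF integral zero_less_one cont nonneg] by blast
qed

end
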